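(* Let $d\ge 3$, integer $\nu\ge 1$, $s>0$, $z\ge 0$. The function $$\zeta(\lambda_1,\dots,\lambda_\nu)=\frac{\prod_{i=1}^\nu\lambda_i^{d/2-2}}{(\sum_{i=1}^\nu\lambda_i+s)^{d/2}}\exp\!\left(-\frac{\sum_i\lambda_i}{\sum_i\lambda_i+s}\,z\right),\qquad \lambda\in(0,\infty)^\nu,$$ is multivariate totally positive of order two (MTP2), i.e. $\zeta(\lambda)\zeta(\xi)\le\zeta(\lambda\vee\xi)\zeta(\lambda\wedge\xi)$ for all $\lambda,\xi\in(0,\infty)^\nu$, where $\vee,\wedge$ denote componentwise maximum and minimum. *)

theory Defs
  imports Complex_Main
begin

text \<open>The function zeta on (0,oo)^nu; vectors are represented as functions
  nat => real, with only the coordinates 0..nu-1 relevant.\<close>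
definition zeta :: "nat \<Rightarrow> nat \<Rightarrow> real \<Rightarrow> real \<Rightarrow> (nat \<Rightarrow> real) \<Rightarrow> real" where
  "zeta d \<nu> s z l =
     (\<Prod>i<\<nu>. l i powr (real d / 2 - 2)) / ((\<Sum>i<\<nu>. l i) + s) powr (real d / 2)
     * exp (- ((\<Sum>i<\<nu>. l i) / ((\<Sum>i<\<nu>. l i) + s)) * z)"

definition MTP2 :: "nat \<Rightarrow> ((nat \<Rightarrow> real) \<Rightarrow> real) \<Rightarrow> bool" where
  "MTP2 \<nu> f \<longleftrightarrow> (\<forall>l x. (\<forall>i<\<nu>. l i > 0) \<longrightarrow> (\<forall>i<\<nu>. x i > 0) \<longrightarrow>
      f l * f x \<le> f (\<lambda>i. max (l i) (x i)) * f (\<lambda>i. min (l i) (x i)))"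

end

theory Submission
  imports Defs
begin

text \<open>
  The function factors as \<open>\<zeta>(\<lambda>) = (\<Prod>\<^sub>i \<lambda>\<^sub>i\<^bsup>d/2-2\<^esup>) \<cdot> g(\<Sigma>\<^sub>i \<lambda>\<^sub>i)\<close> with
  \<open>g(t) = (t+s)\<^bsup>-d/2\<^esup> exp(-z t/(t+s))\<close>. The product factor is unchanged when the pair
  \<open>\<lambda>, \<xi>\<close> is replaced by \<open>\<lambda>\<or>\<xi>, \<lambda>\<and>\<xi>\<close>, whereas the coordinate sums are spread apart:
  with \<open>a = \<Sigma>(\<lambda>\<and>\<xi>)\<close> and \<open>e = \<Sigma>(\<lambda>\<or>\<xi>)\<close> we have \<open>a \<le> \<Sigma>\<lambda>, \<Sigma>\<xi> \<le> e\<close> and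
  \<open>a + e = \<Sigma>\<lambda> + \<Sigma>\<xi>\<close>. Since \<open>g\<close> is log-convex (both \<open>1/(t+s)\<close> and \<open>t \<mapsto> -log(t+s)\<close>
  are convex), spreading the arguments can only increase \<open>g(a) g(e)\<close>.
\<close>

lemma mult_le_mult_if_add_eq:
  fixes a b c e :: "'a::linordered_idom"
  assumes "a \<le> b" "b \<le> e" "a + e = b + c"
  shows "a * e \<le> b * c"
proof -
  have c_eq: "c = a + e - b"
    using assms(3) by simp
  have "b * c - a * e = (b - a) * (e - b)"
    unfolding c_eq by (simp add: algebra_simps)
  moreover have "0 \<le> (b - a) * (e - b)"
    using assms(1,2) by simp
  ultimately show ?thesis by simp
qed

lemma inverse_add_le_if_add_eq:
  fixes a b c e :: real
  assumes "0 < a" "a \<le> b" "b \<le> e" "a + e = b + c"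
  shows "1 / b + 1 / c \<le> 1 / a + 1 / e"
proof -
  have pos: "0 < b" "0 < c" "0 < e"
    using assms by linarith+
  have "1 / b + 1 / c = (a + e) / (b * c)"
    using pos assms(4) by (simp add: field_simps)
  also have "\<dots> \<le> (a + e) / (a * e)"
    using pos assms by (intro divide_left_mono mult_le_mult_if_add_eq) auto
  also have "\<dots> = 1 / a + 1 / e"
    using pos assms(1) by (simp add: field_simps)
  finally show ?thesis .
qed

definition radial_factor :: "real \<Rightarrow> real \<Rightarrow> real \<Rightarrow> real \<Rightarrow> real" where
  "radial_factor k s z t = exp (- (t / (t + s)) * z) / (t + s) powr k"

lemma zeta_eq_prod_times_radial_factor:
  "zeta d \<nu> s z l =
     (\<Prod>i<\<nu>. l i powr (real d / 2 - 2)) * radial_factor (real d / 2) s z (\<Sum>i<\<nu>. l i)"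
  unfolding zeta_def radial_factor_def by simp

lemma radial_factor_mult_le_if_add_eq:
  fixes a b c e k s z :: real
  assumes "0 < a + s" "0 \<le> s" "a \<le> b" "b \<le> e" "a + e = b + c" "0 \<le> k" "0 \<le> z"
  shows "radial_factor k s z b * radial_factor k s z c \<le> radial_factor k s z a * radial_factor k s z e"
proof -
  have pos: "0 < b + s" "0 < c + s" "0 < e + s"
    using assms by linarith+
  have split: "radial_factor k s z t * radial_factor k s z u
      = exp (- (t / (t + s) + u / (u + s)) * z) / ((t + s) * (u + s)) powr k"
    if "0 < t + s" "0 < u + s" for t u
  proof -
    have "((t + s) * (u + s)) powr k = (t + s) powr k * (u + s) powr k"
      using that by (simp add: powr_mult)
    then show ?thesis
      by (simp add: radial_factor_def exp_add[symmetric] ring_distribs)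
  qed
  have shift: "(a + s) + (e + s) = (b + s) + (c + s)"
    using assms(5) by simp
  have "s * (1 / (b + s) + 1 / (c + s)) \<le> s * (1 / (a + s) + 1 / (e + s))"
    using inverse_add_le_if_add_eq[OF assms(1) _ _ shift] assms(2-4) by (intro mult_left_mono) auto
  moreover have "t / (t + s) = 1 - s / (t + s)" if "0 < t + s" for t
    using that by (simp add: field_simps)
  ultimately have "a / (a + s) + e / (e + s) \<le> b / (b + s) + c / (c + s)"
    using assms(1) pos by (simp add: ring_distribs)
  then have exp_le: "exp (- (b / (b + s) + c / (c + s)) * z) \<le> exp (- (a / (a + s) + e / (e + s)) * z)"
    using assms(7) by (simp add: mult_right_mono)
  have "((a + s) * (e + s)) powr k \<le> ((b + s) * (c + s)) powr k"
    using mult_le_mult_if_add_eq[OF _ _ shift] assms pos by (intro powr_mono2) auto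
  with exp_le show ?thesis
    unfolding split[OF pos(1,2)] split[OF assms(1) pos(3)]
    using assms(1) pos by (intro frac_le) auto
qed

lemma prod_powr_max_min:
  fixes f g :: "'a \<Rightarrow> real"
  shows "(\<Prod>i\<in>I. f i powr p) * (\<Prod>i\<in>I. g i powr p)
       = (\<Prod>i\<in>I. max (f i) (g i) powr p) * (\<Prod>i\<in>I. min (f i) (g i) powr p)"
  unfolding prod.distrib[symmetric] by (intro prod.cong) (auto simp: max_def min_def)

lemma sum_max_add_sum_min:
  fixes f g :: "'a \<Rightarrow> 'b::ordered_ab_group_add"
  shows "(\<Sum>i\<in>I. max (f i) (g i)) + (\<Sum>i\<in>I. min (f i) (g i)) = sum f I + sum g I"
  unfolding sum.distrib[symmetric] by (intro sum.cong) (auto simp: max_def min_def)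

theorem lemma3:
  fixes d \<nu> :: nat and s z :: real
  assumes "d \<ge> 3" and "\<nu> \<ge> 1" and "s > 0" and "z \<ge> 0"
  shows "MTP2 \<nu> (zeta d \<nu> s z)"
  unfolding MTP2_def
proof (intro allI impI)
  fix l x :: "nat \<Rightarrow> real"
  assume "\<forall>i<\<nu>. l i > 0" "\<forall>i<\<nu>. x i > 0"
  define P where "P f = (\<Prod>i<\<nu>. f i powr (real d / 2 - 2))" for f :: "nat \<Rightarrow> real"
  define R where "R = radial_factor (real d / 2) s z"
  define \<Sigma> where "\<Sigma> f = (\<Sum>i<\<nu>. f i)" for f :: "nat \<Rightarrow> real"
  let ?max = "\<lambda>i. max (l i) (x i)" and ?min = "\<lambda>i. min (l i) (x i)"
  have zeta_PR: "zeta d \<nu> s z f = P f * R (\<Sigma> f)" for f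
    unfolding P_def R_def \<Sigma>_def by (rule zeta_eq_prod_times_radial_factor)
  have "0 \<le> \<Sigma> ?min"
    unfolding \<Sigma>_def using \<open>\<forall>i<\<nu>. l i > 0\<close> \<open>\<forall>i<\<nu>. x i > 0\<close> by (intro sum_nonneg) auto
  moreover have "\<Sigma> ?min \<le> \<Sigma> l" "\<Sigma> l \<le> \<Sigma> ?max"
    unfolding \<Sigma>_def by (intro sum_mono; simp)+
  moreover have "\<Sigma> ?min + \<Sigma> ?max = \<Sigma> l + \<Sigma> x"
    unfolding \<Sigma>_def using sum_max_add_sum_min[of l x "{..<\<nu>}"] by simp
  ultimately have R_le: "R (\<Sigma> l) * R (\<Sigma> x) \<le> R (\<Sigma> ?min) * R (\<Sigma> ?max)"
    unfolding R_def using assms by (intro radial_factor_mult_le_if_add_eq) auto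
  have P_eq: "P l * P x = P ?max * P ?min"
    unfolding P_def by (rule prod_powr_max_min)
  have "zeta d \<nu> s z l * zeta d \<nu> s z x = (P ?max * P ?min) * (R (\<Sigma> l) * R (\<Sigma> x))"
    unfolding zeta_PR P_eq[symmetric] by (simp only: mult_ac)
  also have "\<dots> \<le> (P ?max * P ?min) * (R (\<Sigma> ?min) * R (\<Sigma> ?max))"
    using R_le by (rule mult_left_mono) (simp add: P_def prod_nonneg)
  also have "\<dots> = zeta d \<nu> s z ?max * zeta d \<nu> s z ?min"
    unfolding zeta_PR by (simp only: mult_ac)
  finally show "zeta d \<nu> s z l * zeta d \<nu> s z x \<le> zeta d \<nu> s z ?max * zeta d \<nu> s z ?min" .
qed

end
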